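(* If an $n$-Brinkhuis triple pair exists, then $s\ge 2^{1/(n-1)}$.
   Context: Let $\Sigma=\{0,1,2\}$. A word over $\Sigma$ is square-free if it cannot be written as $xyyz$ with $y$ nonempty. $\mathcal{A}(n)$ is the set of square-free words of length $n$ over $\Sigma$, $a(n)=|\mathcal{A}(n)|$, and $s=\lim_{n\to\infty}a(n)^{1/n}$ (this limit exists). An $n$-Brinkhuis triple pair consists of three sets $\mathcal{B}^{(0)},\mathcal{B}^{(1)},\mathcal{B}^{(2)}\subset\mathcal{A}(n)$. Each $\mathcal{B}^{(i)}=\{U^{(i)},V^{(i)}\}$ has two distinct square-free words of length $n$. The defining condition: for every square-free word $w_1w_2w_3\in\mathcal{A}(3)$ and every choice $W_j\in\mathcal{B}^{(w_j)}$ for $j=1,2,3$, the concatenation $W_1W_2W_3$ (of length $3n$) is square-free. *)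

theory Defs
  imports Complex_Main
begin

definition square_free :: "nat list \<Rightarrow> bool" where
  "square_free w \<longleftrightarrow> \<not> (\<exists>x y z. y \<noteq> [] \<and> w = x @ y @ y @ z)"

definition sf_words :: "nat \<Rightarrow> nat list set" where
  "sf_words n = {w. length w = n \<and> set w \<subseteq> {0,1,2} \<and> square_free w}"

definition sf_count :: "nat \<Rightarrow> nat" where
  "sf_count n = card (sf_words n)"

text \<open>The growth rate s = lim a(n)^(1/n) (the limit exists).\<close>
definition sf_growth :: real where
  "sf_growth = lim (\<lambda>n. real (sf_count n) powr (1 / real n))"

definition brinkhuis_triple_pair :: "nat \<Rightarrow> (nat \<Rightarrow> nat list set) \<Rightarrow> bool" where
  "brinkhuis_triple_pair n B \<longleftrightarrow>
     (\<forall>i\<in>{0,1,2::nat}. B i \<subseteq> sf_words n \<and> card (B i) = 2) \<and>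
     (\<forall>w\<in>sf_words 3. \<forall>W1\<in>B (w ! 0). \<forall>W2\<in>B (w ! 1). \<forall>W3\<in>B (w ! 2).
         square_free (W1 @ W2 @ W3))"

end

theory Submission
  imports Defs
begin

text \<open>
  Replacing every letter \<open>a\<close> of a square-free ternary word of length \<open>m \<ge> 3\<close> by one of the two
  words in \<open>B a\<close> yields a square-free word of length \<open>m * n\<close>, and different choices yield
  different words, so \<open>2 ^ m * a(m) \<le> a(m * n)\<close>. Square-freeness of these images rests on two
  consequences of the definition: the sets \<open>B a\<close> are pairwise disjoint, and no block occurs at a
  proper offset inside two adjacent blocks. So a square either lies within three consecutive blocks,
  which the definition excludes, or its half-length is a multiple \<open>l * n\<close> of \<open>n\<close>. In the latter case
  it induces either a square in the original word or a square in the concatenation of the blocks at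
  positions \<open>q\<close>, \<open>q + l\<close>, \<open>q + 2 * l\<close>, whose letters then form a square-free word.

  Since \<open>ln a\<close> is subadditive, Fekete's lemma gives \<open>ln a(N) / N \<longlonglongrightarrow> ln s\<close>, and letting
  \<open>m\<close> grow in \<open>(ln 2 + ln a(m) / m) / n \<le> ln a(m * n) / (m * n)\<close> gives \<open>ln 2 \<le> (n - 1) * ln s\<close>.
\<close>

section \<open>Squares in words\<close>

definition square_at :: "'a list \<Rightarrow> nat \<Rightarrow> nat \<Rightarrow> bool" where
  "square_at w p L \<longleftrightarrow> 0 < L \<and> p + 2 * L \<le> length w \<and> (\<forall>i<L. w ! (p + i) = w ! (p + L + i))"

lemma square_free_iff_no_square_at: "square_free w \<longleftrightarrow> (\<forall>p L. \<not> square_at w p L)"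
proof
  assume "square_free w"
  show "\<forall>p L. \<not> square_at w p L"
  proof (intro allI notI)
    fix p L assume sq: "square_at w p L"
    define y where "y = take L (drop p w)"
    have "take L (drop (p + L) w) = y"
      using sq by (intro nth_equalityI) (auto simp: y_def square_at_def add.assoc)
    then have "w = take p w @ y @ y @ drop (p + 2 * L) w"
      unfolding y_def
      by (metis append_take_drop_id drop_drop mult_2 add.commute)
    moreover have "y \<noteq> []"
      using sq by (simp add: y_def square_at_def)
    ultimately show False
      using \<open>square_free w\<close> unfolding square_free_def by blast
  qed
next
  assume no_square: "\<forall>p L. \<not> square_at w p L"
  show "square_free w"
    unfolding square_free_def
  proof (intro notI, elim exE conjE)
    fix x y z assume "y \<noteq> []" "w = x @ y @ y @ z"
    then have "square_at w (length x) (length y)"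
      by (auto simp: square_at_def nth_append)
    with no_square show False by blast
  qed
qed

lemma square_free_factor:
  assumes "square_free (u @ v @ x)"
  shows "square_free v"
  unfolding square_free_def
proof (intro notI, elim exE conjE)
  fix a y b assume "y \<noteq> []" "v = a @ y @ y @ b"
  then have "y \<noteq> [] \<and> u @ v @ x = (u @ a) @ y @ y @ (b @ x)"
    by simp
  with assms show False
    unfolding square_free_def by blast
qed

lemma square_at_factor:
  assumes sq: "square_at (u @ v @ x) p L" and "length u \<le> p" "p + 2 * L \<le> length u + length v"
  shows "square_at v (p - length u) L"
  unfolding square_at_def
proof (intro conjI allI impI)
  show "0 < L" "p - length u + 2 * L \<le> length v"
    using assms by (auto simp: square_at_def)
next
  fix i assume "i < L"
  have v: "v ! k = (u @ v @ x) ! (length u + k)" if "k < length v" for k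
    using that by (simp add: nth_append)
  have "v ! (p - length u + i) = (u @ v @ x) ! (p + i)"
    using v[of "p - length u + i"] \<open>i < L\<close> assms(2,3) by simp
  also have "\<dots> = (u @ v @ x) ! (p + L + i)"
    using sq \<open>i < L\<close> by (simp add: square_at_def)
  also have "\<dots> = v ! (p - length u + L + i)"
    using v[of "p - length u + L + i"] \<open>i < L\<close> assms(2,3) by simp
  finally show "v ! (p - length u + i) = v ! (p - length u + L + i)" .
qed

lemma not_square_free_overlap:
  assumes "drop r X = drop r Y" "take r Y = take r Z" "Y \<noteq> []"
  shows "\<not> square_free (X @ Y @ Z)"
proof -
  obtain x1 y1 y2 z2 where "X = x1 @ y2" "Y = y1 @ y2" "Z = y1 @ z2"
    using assms(1,2) by (metis append_take_drop_id)
  then have "X @ Y @ Z = x1 @ (y2 @ y1) @ (y2 @ y1) @ z2" "y2 @ y1 \<noteq> []"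
    using assms(3) by auto
  then show ?thesis
    unfolding square_free_def by blast
qed

lemma square_free_nth_Suc_neq:
  assumes "square_free w" "Suc j < length w"
  shows "w ! j \<noteq> w ! Suc j"
proof
  assume "w ! j = w ! Suc j"
  then have "square_at w j 1"
    using assms(2) by (simp add: square_at_def)
  then show False
    using assms(1) by (simp add: square_free_iff_no_square_at)
qed

lemma sf_words_3:
  assumes "{a, b, c} \<subseteq> {0, 1, 2}" "a \<noteq> b" "b \<noteq> c"
  shows "[a, b, c] \<in> sf_words 3"
proof -
  have "\<not> square_at [a, b, c] p L" for p L
  proof
    assume "square_at [a, b, c] p L"
    then have "L = 1" "p = 0 \<or> p = 1" and "\<forall>i<L. [a, b, c] ! (p + i) = [a, b, c] ! (p + L + i)"
      by (auto simp: square_at_def)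
    then show False using assms by auto
  qed
  then show ?thesis
    using assms by (simp add: sf_words_def square_free_iff_no_square_at)
qed

lemma sf_words_take: "w \<in> sf_words K \<Longrightarrow> k \<le> K \<Longrightarrow> take k w \<in> sf_words k"
  unfolding sf_words_def using square_free_factor[of "[]" "take k w" "drop k w"]
  by (auto dest: in_set_takeD)

lemma sf_words_drop: "w \<in> sf_words (j + k) \<Longrightarrow> drop j w \<in> sf_words k"
  unfolding sf_words_def using square_free_factor[of "take j w" "drop j w" "[]"]
  by (auto dest: in_set_dropD)

lemma square_at_nth_shift:
  assumes "square_at w p L" "p \<le> x" "x < p + L"
  shows "w ! x = w ! (x + L)"
proof -
  have "p + (x - p) = x" "p + L + (x - p) = x + L"
    using assms(2) by simp_all
  moreover have "x - p < L"
    using assms(2,3) by simp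
  then have "w ! (p + (x - p)) = w ! (p + L + (x - p))"
    using assms(1) unfolding square_at_def by blast
  ultimately show ?thesis
    by (simp only:)
qed

lemma square_free_repetition_neighbours:
  assumes sf: "square_free w" and "0 < l" "q + 2 * l < length w"
    and rep: "\<forall>i. 0 < i \<longrightarrow> i < l \<longrightarrow> w ! (q + i) = w ! (q + l + i)"
  shows "w ! q \<noteq> w ! (q + l)" "w ! (q + l) \<noteq> w ! (q + 2 * l)"
proof -
  show "w ! q \<noteq> w ! (q + l)"
  proof
    assume "w ! q = w ! (q + l)"
    then have "square_at w q l"
      using assms(2,3) rep by (auto simp: square_at_def) (metis add.right_neutral neq0_conv)
    then show False
      using sf by (simp add: square_free_iff_no_square_at)
  qed
  show "w ! (q + l) \<noteq> w ! (q + 2 * l)"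
  proof
    assume last: "w ! (q + l) = w ! (q + 2 * l)"
    have "w ! (q + 1 + i) = w ! (q + 1 + l + i)" if "i < l" for i
    proof (cases "i + 1 < l")
      case True
      then show ?thesis
        using rep[rule_format, of "i + 1"] by (simp add: algebra_simps)
    next
      case False
      then have "q + 1 + i = q + l" "q + 1 + l + i = q + 2 * l"
        using that by simp_all
      then show ?thesis
        using last by (simp only:)
    qed
    then have "square_at w (q + 1) l"
      using assms(2,3) by (simp add: square_at_def)
    then show False
      using sf by (simp add: square_free_iff_no_square_at)
  qed
qed

lemma finite_sf_words: "finite (sf_words k)"
proof (rule finite_subset)
  show "sf_words k \<subseteq> {xs. set xs \<subseteq> {0, 1, 2} \<and> length xs = k}"
    by (auto simp: sf_words_def)
qed (rule finite_lists_length_eq, simp)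

lemma sf_count_submult: "sf_count (j + k) \<le> sf_count j * sf_count k"
proof -
  have "inj_on (\<lambda>w. (take j w, drop j w)) (sf_words (j + k))"
    by (rule inj_onI) (metis append_take_drop_id prod.inject)
  moreover have "(\<lambda>w. (take j w, drop j w)) ` sf_words (j + k) \<subseteq> sf_words j \<times> sf_words k"
    using sf_words_take sf_words_drop by auto
  ultimately have "card (sf_words (j + k)) \<le> card (sf_words j \<times> sf_words k)"
    by (intro card_inj_on_le) (auto simp: finite_sf_words)
  then show ?thesis
    by (simp add: sf_count_def card_cartesian_product)
qed

section \<open>Concatenations of blocks of equal length\<close>

lemma length_concat_uniform:
  "\<forall>W\<in>set Ws. length W = n \<Longrightarrow> length (concat Ws) = length Ws * n"
  by (induction Ws) auto

lemma nth_concat_uniform: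
  "\<forall>W\<in>set Ws. length W = n \<Longrightarrow> j < length Ws \<Longrightarrow> i < n \<Longrightarrow> concat Ws ! (j * n + i) = Ws ! j ! i"
proof (induction Ws arbitrary: j)
  case (Cons W Ws)
  then show ?case
    by (cases j) (auto simp: nth_append add.assoc)
qed simp

lemma concat_three_blocks:
  assumes "q + 3 \<le> length Ws"
  shows "concat Ws = concat (take q Ws) @ (Ws ! q @ Ws ! (q + 1) @ Ws ! (q + 2)) @ concat (drop (q + 3) Ws)"
proof -
  have "drop q Ws = Ws ! q # Ws ! Suc q # Ws ! Suc (Suc q) # drop (Suc (Suc (Suc q))) Ws"
    using assms by (simp add: Cons_nth_drop_Suc)
  then have "drop q Ws = Ws ! q # Ws ! (q + 1) # Ws ! (q + 2) # drop (q + 3) Ws"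
    by (simp add: numeral_2_eq_2 numeral_3_eq_3)
  then show ?thesis
    by (metis append_take_drop_id concat.simps(2) concat_append append.assoc)
qed

lemma nth_adjacent_blocks:
  assumes lengths: "\<forall>W\<in>set Ws. length W = n" and "Suc k < length Ws" "t \<le> n" "i < n"
  shows "(drop t (Ws ! k) @ take t (Ws ! Suc k)) ! i = concat Ws ! (k * n + t + i)"
proof (cases "t + i < n")
  case True
  have "length (Ws ! k) = n"
    using lengths \<open>Suc k < length Ws\<close> by simp
  then have "i < length (drop t (Ws ! k))"
    using True by simp
  then show ?thesis
    using nth_concat_uniform[OF lengths, of k "t + i"] True assms by (simp add: nth_append add.assoc)
next
  case False
  then have "\<not> i < n - t" "i - (n - t) = t + i - n" "t + i - n < t" "k * n + t + i = Suc k * n + (t + i - n)"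
    using assms(3,4) by auto
  then show ?thesis
    using nth_concat_uniform[OF lengths, of "Suc k" "t + i - n"] assms by (simp add: nth_append add.assoc)
qed

lemma card_list_all2_in:
  "card {Ws. list_all2 (\<lambda>a W. W \<in> A a) w Ws} = (\<Prod>a\<leftarrow>w. card (A a))"
proof (induction w)
  case (Cons a w)
  have "{Ws. list_all2 (\<lambda>a W. W \<in> A a) (a # w) Ws}
      = (\<lambda>(W, Ws). W # Ws) ` (A a \<times> {Ws. list_all2 (\<lambda>a W. W \<in> A a) w Ws})"
    by (auto simp: list_all2_Cons1)
  moreover have "inj (\<lambda>(W, Ws). W # Ws)"
    by (auto intro: injI)
  ultimately have "card {Ws. list_all2 (\<lambda>a W. W \<in> A a) (a # w) Ws}
      = card (A a \<times> {Ws. list_all2 (\<lambda>a W. W \<in> A a) w Ws})"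
    by (metis card_image inj_on_subset subset_UNIV)
  then show ?case
    using Cons.IH by (simp add: card_cartesian_product)
qed simp

lemma interval_within_three_blocks:
  fixes n p L :: nat
  assumes "0 < n"
    and first_half: "\<not> (\<exists>j. p \<le> j * n \<and> j * n + n \<le> p + L)"
    and second_half: "\<not> (\<exists>j. p + L \<le> j * n \<and> j * n + n \<le> p + 2 * L)"
  shows "\<exists>q. q * n \<le> p \<and> p + 2 * L \<le> (q + 3) * n"
proof (intro exI conjI)
  let ?q = "p div n" and ?k = "(p + L) div n"
  show "?q * n \<le> p"
    by simp
  have "p \<le> (?q + 1) * n" "p + L \<le> (?k + 1) * n"
    using dividend_less_div_times[OF \<open>0 < n\<close>, of p] dividend_less_div_times[OF \<open>0 < n\<close>, of "p + L"]
    by simp_all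
  then have "\<not> (?q + 1) * n + n \<le> p + L" "\<not> (?k + 1) * n + n \<le> p + 2 * L"
    using first_half second_half by blast+
  then have "p + L < (?q + 2) * n" "p + 2 * L < (?k + 2) * n"
    by (simp_all add: algebra_simps)
  moreover have "?k * n \<le> p + L"
    by simp
  ultimately have "?k < ?q + 2" "p + 2 * L < (?k + 2) * n"
    by (meson le_less_trans mult_less_cancel2)+
  then show "p + 2 * L \<le> (?q + 3) * n"
    using mult_le_mono1[of "?k + 2" "?q + 3" n] by linarith
qed

section \<open>Fekete's lemma and the growth rate\<close>

lemma subadditive_iterate:
  fixes f :: "nat \<Rightarrow> real"
  assumes subadd: "\<And>j k. f (j + k) \<le> f j + f k"
  shows "f (q * k + r) \<le> real q * f k + f r"
proof (induction q)
  case (Suc q)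
  have "f (Suc q * k + r) \<le> f k + f (q * k + r)"
    using subadd[of k "q * k + r"] by (simp add: add.assoc)
  with Suc.IH show ?case
    by (simp add: algebra_simps)
qed simp

lemma subadditive_le_ratio:
  fixes f :: "nat \<Rightarrow> real"
  assumes nonneg: "\<And>k. 0 \<le> f k" and subadd: "\<And>j k. f (j + k) \<le> f j + f k" and "0 < k"
  shows "f N \<le> real N * (f k / real k) + Max (f ` {..<k})"
proof -
  have "f N \<le> real (N div k) * f k + f (N mod k)"
    using subadditive_iterate[OF subadd, of "N div k" k "N mod k"] by simp
  also have "real (N div k) * f k = real (N div k * k) * (f k / real k)"
    using \<open>0 < k\<close> by simp
  also have "\<dots> \<le> real N * (f k / real k)"
    using nonneg[of k] by (intro mult_right_mono) (simp_all del: of_nat_mult)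
  also have "f (N mod k) \<le> Max (f ` {..<k})"
    using \<open>0 < k\<close> by (intro Max_ge) auto
  finally show ?thesis
    by simp
qed

theorem fekete:
  fixes f :: "nat \<Rightarrow> real"
  assumes nonneg: "\<And>k. 0 \<le> f k" and subadd: "\<And>j k. f (j + k) \<le> f j + f k"
  shows "(\<lambda>N. f N / real N) \<longlonglongrightarrow> Inf ((\<lambda>k. f k / real k) ` {1..})"
proof -
  define S where "S = (\<lambda>k. f k / real k) ` {1..}"
  have "S \<noteq> {}" and bdd: "bdd_below S"
    unfolding S_def by (auto intro!: bdd_belowI[of _ 0] simp: nonneg)
  show ?thesis
    unfolding S_def[symmetric]
  proof (rule order_tendstoI)
    fix a assume "a < Inf S"
    moreover have "Inf S \<le> f N / real N" if "1 \<le> N" for N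
      using bdd that unfolding S_def by (intro cInf_lower) auto
    ultimately show "\<forall>\<^sub>F N in sequentially. a < f N / real N"
      unfolding eventually_sequentially by (meson less_le_trans)
  next
    fix a assume "Inf S < a"
    then obtain k where "1 \<le> k" "f k / real k < a"
      using cInf_less_iff[OF \<open>S \<noteq> {}\<close> bdd] unfolding S_def by auto
    define e C where "e = a - f k / real k" and "C = Max (f ` {..<k})"
    have "0 < e"
      using \<open>f k / real k < a\<close> by (simp add: e_def)
    show "\<forall>\<^sub>F N in sequentially. f N / real N < a"
      unfolding eventually_sequentially
    proof (intro exI allI impI)
      fix N assume N: "nat \<lceil>C / e\<rceil> + 1 \<le> N"
      then have "C / e < real N"
        using real_nat_ceiling_ge[of "C / e"] by linarith
      then have "C < e * real N"
        using \<open>0 < e\<close> by (simp add: pos_divide_less_eq mult.commute)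
      moreover have "f N \<le> real N * (f k / real k) + C"
        unfolding C_def using \<open>1 \<le> k\<close> by (intro subadditive_le_ratio nonneg subadd) simp
      ultimately show "f N / real N < a"
        using N by (simp add: pos_divide_less_eq e_def algebra_simps)
    qed
  qed
qed

lemma sf_growth_eq_exp_limit:
  assumes pos: "\<And>N. 0 < sf_count N"
  obtains L where "(\<lambda>N. ln (real (sf_count N)) / real N) \<longlonglongrightarrow> L" and "sf_growth = exp L"
proof
  define f where "f N = ln (real (sf_count N))" for N
  define L where "L = Inf ((\<lambda>k. f k / real k) ` {1..})"
  have "f (j + k) \<le> f j + f k" for j k
  proof -
    have "real (sf_count (j + k)) \<le> real (sf_count j) * real (sf_count k)"
      using sf_count_submult[of j k] by (metis of_nat_le_iff of_nat_mult)
    then have "f (j + k) \<le> ln (real (sf_count j) * real (sf_count k))"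
      unfolding f_def using pos[of "j + k"] by (intro ln_mono) simp_all
    also have "\<dots> = f j + f k"
      unfolding f_def using pos[of j] pos[of k] by (simp add: ln_mult_pos)
    finally show ?thesis .
  qed
  moreover have "0 \<le> f k" for k
    using pos[of k] by (simp add: f_def)
  ultimately show lim: "(\<lambda>N. ln (real (sf_count N)) / real N) \<longlonglongrightarrow> L"
    unfolding L_def f_def[symmetric] by (intro fekete)
  have "real (sf_count N) powr (1 / real N) = exp (ln (real (sf_count N)) / real N)" for N
    using pos[of N] by (simp add: powr_def)
  then have "(\<lambda>N. real (sf_count N) powr (1 / real N)) \<longlonglongrightarrow> exp L"
    using tendsto_exp[OF lim] by simp
  then show "sf_growth = exp L"
    unfolding sf_growth_def by (rule limI)
qed

section \<open>Brinkhuis triple pairs\<close>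

locale brinkhuis_pair =
  fixes n :: nat and B :: "nat \<Rightarrow> nat list set"
  assumes brinkhuis: "brinkhuis_triple_pair n B"
begin

lemma pair_sf_words: "a \<in> {0, 1, 2} \<Longrightarrow> W \<in> B a \<Longrightarrow> W \<in> sf_words n"
  using brinkhuis unfolding brinkhuis_triple_pair_def by blast

lemma pair_length: "a \<in> {0, 1, 2} \<Longrightarrow> W \<in> B a \<Longrightarrow> length W = n"
  using pair_sf_words by (simp add: sf_words_def)

lemma card_pair: "a \<in> {0, 1, 2} \<Longrightarrow> card (B a) = 2"
  using brinkhuis unfolding brinkhuis_triple_pair_def by blast

lemma square_free_triple:
  "[a, b, c] \<in> sf_words 3 \<Longrightarrow> X \<in> B a \<Longrightarrow> Y \<in> B b \<Longrightarrow> Z \<in> B c \<Longrightarrow> square_free (X @ Y @ Z)"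
  using brinkhuis unfolding brinkhuis_triple_pair_def by fastforce

lemma length_pos: "0 < n"
proof (rule ccontr)
  assume "\<not> 0 < n"
  then have "B 0 \<subseteq> {[]}"
    using pair_length[of 0] by auto
  then have "card (B 0) \<le> 1"
    using card_mono[of "{[]}" "B 0"] by simp
  then show False
    using card_pair[of 0] by simp
qed

lemma pair_index_unique:
  assumes "{a, b} \<subseteq> {0, 1, 2}" "W \<in> B a" "W \<in> B b"
  shows "a = b"
proof (rule ccontr)
  assume "a \<noteq> b"
  then have "[a, b, a] \<in> sf_words 3"
    using assms by (intro sf_words_3) auto
  then have "square_free (W @ W @ W)"
    using square_free_triple assms by blast
  moreover have "W \<noteq> []"
    using pair_length[of a W] length_pos assms by auto
  ultimately show False
    unfolding square_free_def by blast
qed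

lemma no_proper_overlap:
  assumes letters: "{a, b, c} \<subseteq> {0, 1, 2}" "b \<noteq> c"
    and blocks: "X \<in> B b" "Y \<in> B c" "Z \<in> B a" and "0 < t" "t < n"
  shows "drop t X @ take t Y \<noteq> Z"
proof
  assume Z: "drop t X @ take t Y = Z"
  have "length X = n" "length Y = n"
    using pair_length letters blocks by auto
  show False
  proof (cases "a = c")
    case False
    have "[a, c, a] \<in> sf_words 3"
      using letters False by (intro sf_words_3) auto
    then have "square_free (Z @ Y @ Z)"
      using square_free_triple blocks by blast
    moreover have "Z @ Y @ Z = drop t X @ take t Y @ take t Y @ drop t Y @ Z"
      using Z by (metis append.assoc append_take_drop_id)
    moreover have "take t Y \<noteq> []"
      using \<open>0 < t\<close> \<open>length Y = n\<close> \<open>t < n\<close> by auto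
    ultimately show False
      unfolding square_free_def by blast
  next
    case True
    have "[b, a, b] \<in> sf_words 3"
      using letters True by (intro sf_words_3) auto
    then have "square_free (X @ Z @ X)"
      using square_free_triple blocks by blast
    moreover have "X @ Z @ X = take t X @ drop t X @ drop t X @ take t Y @ X"
      using Z by (metis append.assoc append_take_drop_id)
    moreover have "drop t X \<noteq> []"
      using \<open>length X = n\<close> \<open>t < n\<close> by auto
    ultimately show False
      unfolding square_free_def by blast
  qed
qed

context
  fixes m :: nat and w :: "nat list" and Ws :: "nat list list"
  assumes word: "w \<in> sf_words m" and blocks: "list_all2 (\<lambda>a W. W \<in> B a) w Ws"
begin

lemma length_word: "length w = m"
  using word by (simp add: sf_words_def)

lemma letter_in_alphabet: "j < m \<Longrightarrow> w ! j \<in> {0, 1, 2}"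
  using word length_word nth_mem[of j w] unfolding sf_words_def by blast

lemma block_in_pair: "j < m \<Longrightarrow> Ws ! j \<in> B (w ! j)"
  using list_all2_nthD[OF blocks, of j] length_word by simp

lemma length_blocks: "length Ws = m"
  using blocks length_word by (simp add: list_all2_lengthD[symmetric])

lemma block_lengths: "\<forall>W\<in>set Ws. length W = n"
  using block_in_pair letter_in_alphabet pair_length length_blocks by (metis in_set_conv_nth)

lemma length_block: "j < m \<Longrightarrow> length (Ws ! j) = n"
  using block_in_pair letter_in_alphabet pair_length by blast

lemma length_concat_blocks: "length (concat Ws) = m * n"
  using length_concat_uniform[OF block_lengths] length_blocks by simp

lemma nth_concat_blocks: "j < m \<Longrightarrow> i < n \<Longrightarrow> concat Ws ! (j * n + i) = Ws ! j ! i"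
  using nth_concat_uniform[OF block_lengths] length_blocks by simp

lemma adjacent_letters_neq: "Suc j < m \<Longrightarrow> w ! j \<noteq> w ! Suc j"
  using word square_free_nth_Suc_neq by (simp add: sf_words_def)

lemma letter_eq_if_block_eq:
  assumes "j < m" "k < m" "Ws ! j = Ws ! k"
  shows "w ! j = w ! k"
proof (rule pair_index_unique)
  show "{w ! j, w ! k} \<subseteq> {0, 1, 2}"
    using letter_in_alphabet assms by simp
  show "Ws ! j \<in> B (w ! j)"
    using block_in_pair assms(1) .
  show "Ws ! j \<in> B (w ! k)"
    using block_in_pair[OF assms(2)] assms(3) by simp
qed

lemma block_occurrence_dvd:
  assumes "j < m" "s + n \<le> m * n" and occ: "\<forall>i<n. concat Ws ! (s + i) = Ws ! j ! i"
  shows "n dvd s"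
proof (rule ccontr)
  assume "\<not> n dvd s"
  define k t where "k = s div n" and "t = s mod n"
  have s: "s = k * n + t" and t: "0 < t" "t < n"
    using \<open>\<not> n dvd s\<close> length_pos by (auto simp: k_def t_def mod_greater_zero_iff_not_dvd)
  have "(k + 1) * n < m * n"
    using s t assms(2) by simp
  then have "Suc k < m"
    by (metis Suc_eq_plus1 mult_less_cancel2)
  have "drop t (Ws ! k) @ take t (Ws ! Suc k) = Ws ! j"
  proof (rule nth_equalityI)
    show "length (drop t (Ws ! k) @ take t (Ws ! Suc k)) = length (Ws ! j)"
      using length_block \<open>Suc k < m\<close> \<open>j < m\<close> t by simp
    fix i assume "i < length (drop t (Ws ! k) @ take t (Ws ! Suc k))"
    then have "i < n"
      using length_block \<open>Suc k < m\<close> t by simp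
    then show "(drop t (Ws ! k) @ take t (Ws ! Suc k)) ! i = Ws ! j ! i"
      using nth_adjacent_blocks[OF block_lengths] occ length_blocks \<open>Suc k < m\<close> s t by simp
  qed
  moreover have "drop t (Ws ! k) @ take t (Ws ! Suc k) \<noteq> Ws ! j"
  proof (rule no_proper_overlap)
    show "{w ! j, w ! k, w ! Suc k} \<subseteq> {0, 1, 2}"
      using letter_in_alphabet \<open>j < m\<close> \<open>Suc k < m\<close> by simp
    show "w ! k \<noteq> w ! Suc k"
      using adjacent_letters_neq \<open>Suc k < m\<close> .
    show "Ws ! k \<in> B (w ! k)" "Ws ! Suc k \<in> B (w ! Suc k)" "Ws ! j \<in> B (w ! j)"
      using block_in_pair \<open>j < m\<close> \<open>Suc k < m\<close> by simp_all
  qed (use t in auto)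
  ultimately show False
    by contradiction
qed

lemma square_block_in_half_dvd:
  assumes sq: "square_at (concat Ws) p L"
    and half: "(p \<le> j * n \<and> j * n + n \<le> p + L) \<or> (p + L \<le> j * n \<and> j * n + n \<le> p + 2 * L)"
  shows "n dvd L"
proof -
  have bound: "p + 2 * L \<le> m * n"
    using sq length_concat_blocks by (simp add: square_at_def)
  then have "(j + 1) * n \<le> m * n"
    using half by auto
  then have "j < m"
    using length_pos by (simp only: mult_le_cancel2) simp
  from half show ?thesis
  proof
    assume first: "p \<le> j * n \<and> j * n + n \<le> p + L"
    have "n dvd j * n + L"
    proof (rule block_occurrence_dvd[OF \<open>j < m\<close>])
      show "j * n + L + n \<le> m * n"
        using first bound by simp
      show "\<forall>i<n. concat Ws ! (j * n + L + i) = Ws ! j ! i"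
        using square_at_nth_shift[OF sq, of "j * n + _"] nth_concat_blocks[OF \<open>j < m\<close>] first
        by (simp add: add.commute add.left_commute)
    qed
    then show ?thesis
      by (simp add: dvd_add_right_iff)
  next
    assume second: "p + L \<le> j * n \<and> j * n + n \<le> p + 2 * L"
    have "n dvd j * n - L"
    proof (rule block_occurrence_dvd[OF \<open>j < m\<close>])
      show "j * n - L + n \<le> m * n"
        using second bound by linarith
      show "\<forall>i<n. concat Ws ! (j * n - L + i) = Ws ! j ! i"
        using square_at_nth_shift[OF sq, of "j * n - L + _"] nth_concat_blocks[OF \<open>j < m\<close>] second
        by auto
    qed
    moreover have "L = j * n - (j * n - L)"
      using second by simp
    ultimately show ?thesis
      by (metis dvd_diff_nat dvd_triv_right)
  qed
qed

lemma no_square_in_three_blocks: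
  assumes "q + 3 \<le> m" "q * n \<le> p" "p + 2 * L \<le> (q + 3) * n"
  shows "\<not> square_at (concat Ws) p L"
proof
  assume sq: "square_at (concat Ws) p L"
  let ?Y = "Ws ! q @ Ws ! (q + 1) @ Ws ! (q + 2)"
  have "[w ! q, w ! (q + 1), w ! (q + 2)] \<in> sf_words 3"
    using assms(1) letter_in_alphabet adjacent_letters_neq[of q] adjacent_letters_neq[of "q + 1"]
    by (intro sf_words_3) auto
  then have "square_free ?Y"
    using square_free_triple block_in_pair assms(1) by simp
  moreover have "length (concat (take q Ws)) = q * n"
    using length_concat_uniform[of "take q Ws" n] block_lengths length_blocks assms(1)
    by (auto dest: in_set_takeD)
  moreover have "length ?Y = 3 * n"
    using block_lengths length_blocks assms(1) by simp
  ultimately have "\<not> square_at ?Y (p - q * n) L"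
    by (simp add: square_free_iff_no_square_at)
  moreover have "square_at ?Y (p - q * n) L"
    using square_at_factor[of "concat (take q Ws)" ?Y] sq assms concat_three_blocks[of q Ws]
      length_blocks \<open>length (concat (take q Ws)) = q * n\<close> \<open>length ?Y = 3 * n\<close>
    by (simp add: algebra_simps)
  ultimately show False
    by contradiction
qed

lemma aligned_square_block_shift:
  assumes sq: "square_at (concat Ws) p (l * n)" and "p \<le> j * n + i" "j * n + i < p + l * n" "i < n"
  shows "Ws ! j ! i = Ws ! (j + l) ! i"
proof -
  have "(j + l) * n + i < m * n"
    using sq assms(3) length_concat_blocks by (auto simp: square_at_def algebra_simps)
  then have "j + l < m"
    by (metis add_lessD1 mult_less_cancel2)
  have "Ws ! j ! i = concat Ws ! (j * n + i)"
    using nth_concat_blocks \<open>j + l < m\<close> \<open>i < n\<close> by simp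
  also have "\<dots> = concat Ws ! ((j + l) * n + i)"
    using square_at_nth_shift[OF sq assms(2,3)] by (simp add: algebra_simps)
  also have "\<dots> = Ws ! (j + l) ! i"
    using nth_concat_blocks \<open>j + l < m\<close> \<open>i < n\<close> by simp
  finally show ?thesis .
qed

lemma aligned_square_letter_shift:
  assumes sq: "square_at (concat Ws) p (l * n)" and "p \<le> j * n" "j * n + n \<le> p + l * n"
  shows "w ! j = w ! (j + l)"
proof (rule letter_eq_if_block_eq)
  have "(j + l + 1) * n \<le> m * n"
    using sq assms(3) length_concat_blocks by (auto simp: square_at_def algebra_simps)
  then have "j + l + 1 \<le> m"
    using length_pos by (metis mult_le_cancel2)
  then show "j + l < m" "j < m"
    by simp_all
  show "Ws ! j = Ws ! (j + l)"
    using aligned_square_block_shift[OF sq] assms(2,3) block_lengths length_blocks \<open>j + l < m\<close>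
    by (intro nth_equalityI) auto
qed

lemma aligned_square_letter_repeat:
  assumes sq: "square_at (concat Ws) (q * n + r) (l * n)"
    and "r < n" "i < l" "0 < i \<or> r = 0"
  shows "w ! (q + i) = w ! (q + l + i)"
proof -
  have "r \<le> i * n"
  proof (cases "i = 0")
    case False
    then have "n \<le> i * n"
      by simp
    then show ?thesis
      using \<open>r < n\<close> by linarith
  qed (use assms(4) in simp)
  moreover have "(q + i + 1) * n \<le> (q + l) * n"
    using \<open>i < l\<close> by (intro mult_le_mono1) simp
  ultimately show ?thesis
    using aligned_square_letter_shift[OF sq, of "q + i"] by (simp add: algebra_simps)
qed

lemma aligned_square_overlap:
  assumes sq: "square_at (concat Ws) (q * n + r) (l * n)" and "r < n" "q + 2 * l < m"
  shows "drop r (Ws ! q) = drop r (Ws ! (q + l))" "take r (Ws ! (q + l)) = take r (Ws ! (q + 2 * l))"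
proof -
  have "n \<le> l * n"
    using sq by (simp add: square_at_def)
  show "drop r (Ws ! q) = drop r (Ws ! (q + l))"
  proof (rule nth_equalityI)
    show "length (drop r (Ws ! q)) = length (drop r (Ws ! (q + l)))"
      using length_block \<open>q + 2 * l < m\<close> by simp
    fix i assume "i < length (drop r (Ws ! q))"
    then have "r + i < n"
      using length_block \<open>q + 2 * l < m\<close> by simp
    moreover from this have "i < l * n"
      using \<open>n \<le> l * n\<close> by linarith
    ultimately have "Ws ! q ! (r + i) = Ws ! (q + l) ! (r + i)"
      using aligned_square_block_shift[OF sq, of q "r + i"] by simp
    then show "drop r (Ws ! q) ! i = drop r (Ws ! (q + l)) ! i"
      using length_block \<open>q + 2 * l < m\<close> \<open>r < n\<close> by simp
  qed
  show "take r (Ws ! (q + l)) = take r (Ws ! (q + 2 * l))"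
  proof (rule nth_equalityI)
    show "length (take r (Ws ! (q + l))) = length (take r (Ws ! (q + 2 * l)))"
      using length_block \<open>q + 2 * l < m\<close> by simp
    fix i assume "i < length (take r (Ws ! (q + l)))"
    then have "i < r"
      by simp
    then have "Ws ! (q + l) ! i = Ws ! (q + l + l) ! i"
      using aligned_square_block_shift[OF sq, of "q + l" i] \<open>r < n\<close> \<open>n \<le> l * n\<close>
      by (simp add: algebra_simps)
    then show "take r (Ws ! (q + l)) ! i = take r (Ws ! (q + 2 * l)) ! i"
      using \<open>i < r\<close> by (simp add: mult_2 add.assoc)
  qed
qed

lemma no_aligned_square: "\<not> square_at (concat Ws) p (l * n)"
proof
  assume "square_at (concat Ws) p (l * n)"
  moreover obtain q r where p: "p = q * n + r" and "r < n"
    using div_mult_mod_eq[of p n] mod_less_divisor[OF length_pos] by metis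
  ultimately have sq: "square_at (concat Ws) (q * n + r) (l * n)"
    by simp
  have "0 < l" and bound: "q * n + r + 2 * (l * n) \<le> m * n"
    using sq length_concat_blocks by (auto simp: square_at_def)
  note repeat = aligned_square_letter_repeat[OF sq \<open>r < n\<close>]
  show False
  proof (cases "r = 0")
    case True
    then have "(q + 2 * l) * n \<le> m * n"
      using bound by (simp add: algebra_simps)
    then have "q + 2 * l \<le> m"
      using length_pos by (metis mult_le_cancel2)
    then have "square_at w q l"
      using \<open>0 < l\<close> True repeat length_word by (simp add: square_at_def)
    then show False
      using word by (simp add: sf_words_def square_free_iff_no_square_at)
  next
    case False
    then have "(q + 2 * l) * n < m * n"
      using bound by (simp add: algebra_simps)
    then have "q + 2 * l < m"
      by (metis mult_less_cancel2)
    then have "w ! q \<noteq> w ! (q + l)" "w ! (q + l) \<noteq> w ! (q + 2 * l)"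
      using square_free_repetition_neighbours[of w l q] word repeat \<open>0 < l\<close> length_word
      by (simp_all add: sf_words_def)
    then have "[w ! q, w ! (q + l), w ! (q + 2 * l)] \<in> sf_words 3"
      using letter_in_alphabet \<open>q + 2 * l < m\<close> by (intro sf_words_3) auto
    then have "square_free (Ws ! q @ Ws ! (q + l) @ Ws ! (q + 2 * l))"
      using square_free_triple block_in_pair \<open>q + 2 * l < m\<close> by simp
    moreover have "Ws ! (q + l) \<noteq> []"
      using length_block[of "q + l"] \<open>q + 2 * l < m\<close> length_pos by auto
    ultimately show False
      using not_square_free_overlap aligned_square_overlap[OF sq \<open>r < n\<close> \<open>q + 2 * l < m\<close>] by blast
  qed
qed

theorem square_free_concat_blocks:
  assumes "3 \<le> m"
  shows "square_free (concat Ws)"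
  unfolding square_free_iff_no_square_at
proof (intro allI notI)
  fix p L assume sq: "square_at (concat Ws) p L"
  have bound: "p + 2 * L \<le> m * n"
    using sq length_concat_blocks by (simp add: square_at_def)
  consider (block_in_half) j where
      "(p \<le> j * n \<and> j * n + n \<le> p + L) \<or> (p + L \<le> j * n \<and> j * n + n \<le> p + 2 * L)"
    | (short) q where "q * n \<le> p" "p + 2 * L \<le> (q + 3) * n"
    using interval_within_three_blocks[OF length_pos] by blast
  then show False
  proof cases
    case block_in_half
    then obtain l where "L = l * n"
      using square_block_in_half_dvd[OF sq] by (metis dvd_def mult.commute)
    then show False
      using no_aligned_square sq by simp
  next
    case short
    \<comment> \<open>the three blocks from \<open>q\<close> on may reach past the end; the last three blocks still contain the square\<close>
    let ?q = "min q (m - 3)"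
    have "?q * n \<le> p"
      using short(1) by (meson min.cobounded1 mult_le_mono1 order.trans)
    moreover have "p + 2 * L \<le> (?q + 3) * n"
      using short(2) bound assms by (cases "q \<le> m - 3") simp_all
    ultimately show False
      using no_square_in_three_blocks[of ?q] sq assms by simp
  qed
qed

end

lemma concat_blocks_in_sf_words:
  assumes "w \<in> sf_words m" "list_all2 (\<lambda>a W. W \<in> B a) w Ws" "3 \<le> m"
  shows "concat Ws \<in> sf_words (m * n)"
proof -
  have "set (concat Ws) \<subseteq> {0, 1, 2}"
    using block_in_pair[OF assms(1,2)] letter_in_alphabet[OF assms(1,2)] pair_sf_words
      length_blocks[OF assms(1,2)]
    by (fastforce simp: sf_words_def in_set_conv_nth)
  then show ?thesis
    using square_free_concat_blocks[OF assms] length_concat_blocks[OF assms(1,2)]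
    by (simp add: sf_words_def)
qed

lemma card_block_choices:
  assumes "w \<in> sf_words m"
  shows "card {Ws. list_all2 (\<lambda>a W. W \<in> B a) w Ws} = 2 ^ m"
proof -
  have "map (\<lambda>a. card (B a)) w = map (\<lambda>_. 2) w"
    using assms card_pair by (intro map_cong) (auto simp: sf_words_def)
  then show ?thesis
    using assms by (simp add: card_list_all2_in map_replicate_const sf_words_def)
qed

theorem sf_count_mult_lower_bound:
  assumes "3 \<le> m"
  shows "2 ^ m * sf_count m \<le> sf_count (m * n)"
proof -
  define C where "C w = {Ws. list_all2 (\<lambda>a W. W \<in> B a) w Ws}" for w
  have finite_C: "finite (C w)" if "w \<in> sf_words m" for w
    using card_block_choices[OF that] by (intro card_ge_0_finite) (simp add: C_def)
  have "card (Sigma (sf_words m) C) = 2 ^ m * sf_count m"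
    using card_block_choices finite_C by (simp add: C_def finite_sf_words sf_count_def)
  moreover have "inj_on (\<lambda>(w, Ws). concat Ws) (Sigma (sf_words m) C)"
  proof (rule inj_onI, clarsimp simp: C_def)
    fix w Ws w' Ws'
    assume w: "w \<in> sf_words m" "list_all2 (\<lambda>a W. W \<in> B a) w Ws"
      and w': "w' \<in> sf_words m" "list_all2 (\<lambda>a W. W \<in> B a) w' Ws'"
      and eq: "concat Ws = concat Ws'"
    have "\<forall>(W, W') \<in> set (zip Ws Ws'). length W = length W'"
    proof clarify
      fix W W' assume "(W, W') \<in> set (zip Ws Ws')"
      then have "W \<in> set Ws" "W' \<in> set Ws'"
        by (meson set_zip_leftD, meson set_zip_rightD)
      then show "length W = length W'"
        using block_lengths[OF w] block_lengths[OF w'] by simp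
    qed
    then have "Ws = Ws'"
      using concat_injective[OF eq] length_blocks[OF w] length_blocks[OF w'] by simp
    moreover have "w ! j = w' ! j" if "j < m" for j
    proof (rule pair_index_unique)
      show "{w ! j, w' ! j} \<subseteq> {0, 1, 2}"
        using letter_in_alphabet[OF w that] letter_in_alphabet[OF w' that] by simp
      show "Ws ! j \<in> B (w ! j)" "Ws ! j \<in> B (w' ! j)"
        using block_in_pair[OF w that] block_in_pair[OF w' that] \<open>Ws = Ws'\<close> by simp_all
    qed
    ultimately show "w = w' \<and> Ws = Ws'"
      using length_word[OF w] length_word[OF w'] by (simp add: nth_equalityI)
  qed
  moreover have "(\<lambda>(w, Ws). concat Ws) ` Sigma (sf_words m) C \<subseteq> sf_words (m * n)"
    using concat_blocks_in_sf_words assms by (auto simp: C_def)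
  ultimately show ?thesis
    using card_inj_on_le[OF _ _ finite_sf_words] by (metis sf_count_def)
qed

lemma two_le_length: "2 \<le> n"
proof (rule ccontr)
  assume "\<not> 2 \<le> n"
  then have "n = 1"
    using length_pos by simp
  then have "8 * sf_count 3 \<le> sf_count 3"
    using sf_count_mult_lower_bound[of 3] by simp
  moreover have "[0, 1, 2] \<in> sf_words 3"
    by (intro sf_words_3) auto
  then have "0 < sf_count 3"
    using finite_sf_words by (auto simp: sf_count_def card_gt_0_iff)
  ultimately show False
    by simp
qed

lemma sf_count_pos: "0 < sf_count k"
proof -
  have "sf_words (3 * n ^ j) \<noteq> {}" for j
  proof (induction j)
    case 0
    have "[0, 1, 2] \<in> sf_words 3"
      by (intro sf_words_3) auto
    then show ?case
      by auto
  next
    case (Suc j)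
    then have "0 < 2 ^ (3 * n ^ j) * sf_count (3 * n ^ j)"
      using finite_sf_words by (simp add: sf_count_def card_gt_0_iff)
    also have "\<dots> \<le> sf_count (3 * n ^ j * n)"
      using length_pos by (intro sf_count_mult_lower_bound) simp
    finally have "0 < sf_count (3 * n ^ Suc j)"
      by (simp add: mult.assoc mult.commute[of n])
    then show ?case
      by (auto simp: sf_count_def)
  qed
  moreover have "k \<le> 3 * n ^ k"
    using less_exp[of k] power_mono[OF two_le_length, of k] by linarith
  ultimately obtain w where "take k w \<in> sf_words k"
    using sf_words_take by blast
  then show ?thesis
    using finite_sf_words by (auto simp: sf_count_def card_gt_0_iff)
qed

lemma ln_sf_count_mult_lower_bound:
  assumes "3 \<le> m"
  shows "(ln 2 + ln (real (sf_count m)) / real m) / real n \<le> ln (real (sf_count (m * n))) / real (m * n)"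
proof -
  have "2 ^ m * real (sf_count m) \<le> real (sf_count (m * n))"
    using sf_count_mult_lower_bound[OF assms] by (metis of_nat_le_iff of_nat_mult of_nat_numeral of_nat_power)
  then have "ln (2 ^ m * real (sf_count m)) \<le> ln (real (sf_count (m * n)))"
    using sf_count_pos[of m] by (intro ln_mono) simp_all
  moreover have "ln (2 ^ m * real (sf_count m)) = real m * ln 2 + ln (real (sf_count m))"
    using sf_count_pos[of m] by (simp add: ln_mult ln_realpow)
  moreover have "(ln 2 + ln (real (sf_count m)) / real m) / real n
      = (real m * ln 2 + ln (real (sf_count m))) / real (m * n)"
    using assms length_pos by (simp add: field_simps)
  ultimately show ?thesis
    by (simp add: divide_right_mono)
qed

end

theorem lemma1:
  fixes n :: nat
  assumes "\<exists>B. brinkhuis_triple_pair n B"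
  shows "sf_growth \<ge> 2 powr (1 / (real n - 1))"
proof -
  obtain B where "brinkhuis_triple_pair n B"
    using assms by blast
  then interpret brinkhuis_pair n B
    by unfold_locales
  obtain L where lim: "(\<lambda>N. ln (real (sf_count N)) / real N) \<longlonglongrightarrow> L" and "sf_growth = exp L"
    using sf_growth_eq_exp_limit sf_count_pos by blast
  have "strict_mono (\<lambda>m. m * n)"
    using length_pos by (intro strict_monoI) simp
  then have "(\<lambda>m. ln (real (sf_count (m * n))) / real (m * n)) \<longlonglongrightarrow> L"
    using LIMSEQ_subseq_LIMSEQ[OF lim] by (simp only: comp_def)
  moreover have "(\<lambda>m. (ln 2 + ln (real (sf_count m)) / real m) / real n) \<longlonglongrightarrow> (ln 2 + L) / real n"
    using length_pos by (intro tendsto_intros lim) simp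
  ultimately have "(ln 2 + L) / real n \<le> L"
    using ln_sf_count_mult_lower_bound
    by (intro tendsto_le[OF trivial_limit_sequentially]) (auto simp: eventually_sequentially)
  then have "ln 2 / (real n - 1) \<le> L"
    using two_le_length by (simp add: field_simps)
  then have "exp (ln 2 / (real n - 1)) \<le> exp L"
    by simp
  then show ?thesis
    unfolding \<open>sf_growth = exp L\<close> by (simp add: powr_def)
qed

end
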